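(* Let $W\in[0,1]^{k\times k}$ be a symmetric positive semidefinite matrix with unit diagonal, $\mu>0$, and consider linear utilities $u_i({\boldsymbol\theta})=W_i^\top{\boldsymbol\theta}$ with thresholds $\mu_i=\mu$ and strategy space $\mathbb{R}_+^k$. Let ${\boldsymbol\theta}^{\mathrm{eq}}$ be an optimal stable equilibrium, $I=\{i:\theta^{\mathrm{eq}}_i=0\}$, and $\bar W$ the restriction of $W$ (rows and columns) to $[k]\setminus I$. If $\bar{\boldsymbol\theta}$ is an optimal solution of $\min_{\bf x}\{\mathbf{1}^\top{\bf x}:\bar W{\bf x}\ge\mu\mathbf{1},\ {\bf x}\ge\mathbf{0}\}$, then $\bar W\bar{\boldsymbol\theta}=\mu\mathbf{1}$.
   Context: $W_i$ is the $i$-th column of $W$. ${\boldsymbol\theta}$ is feasible if $u_i({\boldsymbol\theta})\ge\mu$ for all $i$. A feasible ${\boldsymbol\theta}\in\mathbb{R}_+^k$ is a stable equilibrium if for no $i$ is there $0\le\theta_i'<\theta_i$ with $u_i(\theta_i',{\boldsymbol\theta}_{-i})\ge\mu$ (${\boldsymbol\theta}$ with $i$-th entry replaced). An optimal stable equilibrium minimizes $\mathbf{1}^\top{\boldsymbol\theta}$ among stable equilibria. *)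

theory Defs
  imports Main "HOL-Analysis.Analysis"
begin

text \<open>Index set [k] is modelled by a finite type 'n (k = CARD('n)); a k x k matrix is
  W :: 'n \<Rightarrow> 'n \<Rightarrow> real, a vector is 'n \<Rightarrow> real.\<close>

definition psd :: "('n::finite \<Rightarrow> 'n \<Rightarrow> real) \<Rightarrow> bool" where
  "psd W \<longleftrightarrow> (\<forall>v. 0 \<le> (\<Sum>i\<in>UNIV. \<Sum>j\<in>UNIV. v i * W i j * v j))"

definition util :: "('n::finite \<Rightarrow> 'n \<Rightarrow> real) \<Rightarrow> 'n \<Rightarrow> ('n \<Rightarrow> real) \<Rightarrow> real" where
  "util W i \<theta> = (\<Sum>j\<in>UNIV. W j i * \<theta> j)"

definition feasible :: "('n::finite \<Rightarrow> 'n \<Rightarrow> real) \<Rightarrow> real \<Rightarrow> ('n \<Rightarrow> real) \<Rightarrow> bool" where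
  "feasible W \<mu> \<theta> \<longleftrightarrow> (\<forall>i. util W i \<theta> \<ge> \<mu>)"

definition stable_eq :: "('n::finite \<Rightarrow> 'n \<Rightarrow> real) \<Rightarrow> real \<Rightarrow> ('n \<Rightarrow> real) \<Rightarrow> bool" where
  "stable_eq W \<mu> \<theta> \<longleftrightarrow> (\<forall>i. 0 \<le> \<theta> i) \<and> feasible W \<mu> \<theta> \<and>
     \<not> (\<exists>i t. 0 \<le> t \<and> t < \<theta> i \<and> util W i (\<theta>(i := t)) \<ge> \<mu>)"

definition optimal_stable_eq :: "('n::finite \<Rightarrow> 'n \<Rightarrow> real) \<Rightarrow> real \<Rightarrow> ('n \<Rightarrow> real) \<Rightarrow> bool" where
  "optimal_stable_eq W \<mu> \<theta> \<longleftrightarrow> stable_eq W \<mu> \<theta> \<and>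
     (\<forall>\<theta>'. stable_eq W \<mu> \<theta>' \<longrightarrow> (\<Sum>i\<in>UNIV. \<theta> i) \<le> (\<Sum>i\<in>UNIV. \<theta>' i))"

text \<open>Restricted LP  min { 1^T x : Wbar x \<ge> mu 1, x \<ge> 0 } over coordinates J = [k] \ I.
  A vector indexed by J is represented as x :: 'n \<Rightarrow> real with x i = 0 outside J.\<close>
definition lp_feasible :: "('n::finite \<Rightarrow> 'n \<Rightarrow> real) \<Rightarrow> real \<Rightarrow> 'n set \<Rightarrow> ('n \<Rightarrow> real) \<Rightarrow> bool" where
  "lp_feasible W \<mu> J x \<longleftrightarrow> (\<forall>i. i \<notin> J \<longrightarrow> x i = 0) \<and> (\<forall>i\<in>J. 0 \<le> x i) \<and>
     (\<forall>i\<in>J. (\<Sum>j\<in>J. W i j * x j) \<ge> \<mu>)"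

definition lp_optimal :: "('n::finite \<Rightarrow> 'n \<Rightarrow> real) \<Rightarrow> real \<Rightarrow> 'n set \<Rightarrow> ('n \<Rightarrow> real) \<Rightarrow> bool" where
  "lp_optimal W \<mu> J x \<longleftrightarrow> lp_feasible W \<mu> J x \<and>
     (\<forall>y. lp_feasible W \<mu> J y \<longrightarrow> (\<Sum>j\<in>J. x j) \<le> (\<Sum>j\<in>J. y j))"

end

theory Submission
  imports Defs
begin

text \<open>At a stable equilibrium every player with positive contribution has a tight constraint:
  since \<open>W i i = 1\<close>, lowering \<open>\<theta> i\<close> by the slack keeps the constraint satisfied. So the
  equilibrium, restricted to its support \<open>J\<close>, is feasible for the restricted LP with
  \<open>W\<^sub>J \<theta>eq = \<mu> 1\<close>, and optimality of \<open>\<theta>bar\<close> gives \<open>1\<^sup>T \<theta>bar \<le> 1\<^sup>T \<theta>eq\<close>. By symmetry of \<open>W\<close>,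
  \<open>\<theta>eq\<^sup>T (W\<^sub>J \<theta>bar - \<mu> 1) = \<mu> (1\<^sup>T \<theta>bar - 1\<^sup>T \<theta>eq) \<le> 0\<close>, a sum of nonnegative terms; as
  \<open>\<theta>eq > 0\<close> on \<open>J\<close>, every slack of \<open>\<theta>bar\<close> vanishes (complementary slackness).
  Positive semidefiniteness and the bounds on the entries of \<open>W\<close> are not needed.\<close>

lemma util_fun_upd:
  "util W i (\<theta>(i := t)) = util W i \<theta> + W i i * (t - \<theta> i)"
proof -
  have "util W i (\<theta>(i := t)) = (\<Sum>j\<in>UNIV. W j i * \<theta> j + (if j = i then W i i * (t - \<theta> i) else 0))"
    unfolding util_def by (rule sum.cong) (auto simp: algebra_simps)
  then show ?thesis
    by (simp add: sum.distrib util_def)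
qed

lemma stable_eq_tight:
  assumes diag: "\<forall>i. W i i = 1"
    and stable: "stable_eq W \<mu> \<theta>"
    and active: "\<theta> i \<noteq> 0"
  shows "util W i \<theta> = \<mu>"
proof (rule ccontr)
  assume "util W i \<theta> \<noteq> \<mu>"
  moreover have "util W i \<theta> \<ge> \<mu>"
    using stable unfolding stable_eq_def feasible_def by blast
  ultimately have slack: "util W i \<theta> > \<mu>"
    by linarith
  have "\<theta> i \<ge> 0"
    using stable unfolding stable_eq_def by blast
  with active have pos: "\<theta> i > 0"
    by linarith
  define t where "t = max 0 (\<theta> i - (util W i \<theta> - \<mu>))"
  have "0 \<le> t" "t < \<theta> i"
    using slack pos unfolding t_def by auto
  moreover have "util W i (\<theta>(i := t)) \<ge> \<mu>"
    using diag unfolding util_fun_upd t_def by simp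
  ultimately show False
    using stable unfolding stable_eq_def by blast
qed

lemma util_eq_sum_support:
  assumes sym: "\<forall>i j. W i j = W j i"
  shows "util W i \<theta> = (\<Sum>j\<in>{j. \<theta> j \<noteq> 0}. W i j * \<theta> j)"
proof -
  have "util W i \<theta> = (\<Sum>j\<in>UNIV. W i j * \<theta> j)"
    unfolding util_def using sym by metis
  also have "\<dots> = (\<Sum>j\<in>{j. \<theta> j \<noteq> 0}. W i j * \<theta> j)"
    by (rule sum.mono_neutral_right) auto
  finally show ?thesis .
qed

lemma sum_bilinear_sym:
  fixes W :: "'a \<Rightarrow> 'a \<Rightarrow> 'b::comm_semiring_0"
  assumes sym: "\<forall>i j. W i j = W j i"
  shows "(\<Sum>i\<in>J. x i * (\<Sum>j\<in>J. W i j * y j)) = (\<Sum>j\<in>J. y j * (\<Sum>i\<in>J. W j i * x i))"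
proof -
  have "(\<Sum>i\<in>J. x i * (\<Sum>j\<in>J. W i j * y j)) = (\<Sum>i\<in>J. \<Sum>j\<in>J. y j * (W i j * x i))"
    by (simp add: sum_distrib_left mult.commute mult.left_commute)
  also have "\<dots> = (\<Sum>i\<in>J. \<Sum>j\<in>J. y j * (W j i * x i))"
    using sym by (intro sum.cong refl) simp
  also have "\<dots> = (\<Sum>j\<in>J. y j * (\<Sum>i\<in>J. W j i * x i))"
    by (subst sum.swap) (simp add: sum_distrib_left)
  finally show ?thesis .
qed

lemma lp_feasible_complementary_slackness:
  fixes W :: "'n::finite \<Rightarrow> 'n \<Rightarrow> real"
  assumes sym: "\<forall>i j. W i j = W j i"
    and mu_nonneg: "\<mu> \<ge> 0"
    and x_pos: "\<forall>i\<in>J. 0 < x i"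
    and x_tight: "\<forall>i\<in>J. (\<Sum>j\<in>J. W i j * x j) = \<mu>"
    and y_feas: "lp_feasible W \<mu> J y"
    and y_le: "(\<Sum>j\<in>J. y j) \<le> (\<Sum>j\<in>J. x j)"
  shows "\<forall>i\<in>J. (\<Sum>j\<in>J. W i j * y j) = \<mu>"
proof -
  define slack where "slack i = (\<Sum>j\<in>J. W i j * y j) - \<mu>" for i
  have slack_nonneg: "\<forall>i\<in>J. 0 \<le> x i * slack i"
    using x_pos y_feas unfolding lp_feasible_def slack_def by auto
  have "(\<Sum>i\<in>J. x i * slack i) = (\<Sum>i\<in>J. x i * (\<Sum>j\<in>J. W i j * y j)) - \<mu> * (\<Sum>i\<in>J. x i)"
    unfolding slack_def by (simp add: right_diff_distrib sum_subtractf sum_distrib_left mult.commute)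
  also have "(\<Sum>i\<in>J. x i * (\<Sum>j\<in>J. W i j * y j)) = (\<Sum>j\<in>J. y j * (\<Sum>i\<in>J. W j i * x i))"
    by (rule sum_bilinear_sym[OF sym])
  also have "\<dots> = (\<Sum>j\<in>J. y j * \<mu>)"
    using x_tight by (auto intro!: sum.cong)
  also have "\<dots> = \<mu> * (\<Sum>j\<in>J. y j)"
    by (simp add: sum_distrib_left mult.commute)
  finally have "(\<Sum>i\<in>J. x i * slack i) = \<mu> * ((\<Sum>j\<in>J. y j) - (\<Sum>i\<in>J. x i))"
    by (simp add: right_diff_distrib)
  also have "\<dots> \<le> 0"
    using y_le mu_nonneg by (simp add: mult_nonneg_nonpos)
  finally have "(\<Sum>i\<in>J. x i * slack i) \<le> 0" .
  moreover have "0 \<le> (\<Sum>i\<in>J. x i * slack i)"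
    using slack_nonneg by (simp add: sum_nonneg)
  ultimately have "(\<Sum>i\<in>J. x i * slack i) = 0"
    by linarith
  then have "\<forall>i\<in>J. x i * slack i = 0"
    using sum_nonneg_eq_0_iff[of J "\<lambda>i. x i * slack i"] slack_nonneg by simp
  with x_pos have "\<forall>i\<in>J. slack i = 0"
    by fastforce
  then show ?thesis
    unfolding slack_def by simp
qed

theorem lemma3:
  fixes W :: "'n::finite \<Rightarrow> 'n \<Rightarrow> real" and \<mu> :: real
    and \<theta>eq \<theta>bar :: "'n \<Rightarrow> real"
  assumes W_range: "\<forall>i j. 0 \<le> W i j \<and> W i j \<le> 1"
    and W_sym: "\<forall>i j. W i j = W j i"
    and W_psd: "psd W"
    and W_diag: "\<forall>i. W i i = 1"
    and mu_pos: "\<mu> > 0"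
    and eq_opt: "optimal_stable_eq W \<mu> \<theta>eq"
    and bar_opt: "lp_optimal W \<mu> {i. \<theta>eq i \<noteq> 0} \<theta>bar"
  shows "\<forall>i\<in>{i. \<theta>eq i \<noteq> 0}. (\<Sum>j\<in>{i. \<theta>eq i \<noteq> 0}. W i j * \<theta>bar j) = \<mu>"
proof -
  define J where "J = {i. \<theta>eq i \<noteq> 0}"
  have stable: "stable_eq W \<mu> \<theta>eq"
    using eq_opt unfolding optimal_stable_eq_def by blast
  have eq_pos: "\<forall>i\<in>J. 0 < \<theta>eq i"
    using stable unfolding stable_eq_def J_def by (simp add: order_less_le)
  have eq_tight: "\<forall>i\<in>J. (\<Sum>j\<in>J. W i j * \<theta>eq j) = \<mu>"
    using stable_eq_tight[OF W_diag stable] util_eq_sum_support[OF W_sym] by (simp add: J_def)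
  have "lp_feasible W \<mu> J \<theta>eq"
    using eq_pos eq_tight unfolding lp_feasible_def J_def by auto
  then have "lp_feasible W \<mu> J \<theta>bar" "(\<Sum>j\<in>J. \<theta>bar j) \<le> (\<Sum>j\<in>J. \<theta>eq j)"
    using bar_opt unfolding lp_optimal_def J_def by blast+
  then show ?thesis
    using lp_feasible_complementary_slackness[OF W_sym _ eq_pos eq_tight] mu_pos
    unfolding J_def by simp
qed

end
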